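(* For all $i\ge1$, $$\frac{\lambda_{i+1}}{\lambda_i}\in\left[t'(\phi_i),\,t'(\phi_{i-1})\right].$$
   Context: Let $D=\{c_j\}_{j=0}^d$ be an offspring distribution of a Galton–Watson branching process on an infinite $d$-ary tree, with each non-root node independently holding an answer with probability $1/n$. Let $t(x)=\sum_{j=0}^d c_j x^j(1-\frac1n)^j$, $\phi_0=1$, $\phi_i=t(\phi_{i-1})$ for $i\ge1$ (the probability that no active node in the first $i$ levels holds an answer), and $\lambda_i=\phi_{i-1}-\phi_i$ for $i\ge1$ (the probability that the first answer is at level $i$). *)

theory Defs
  imports "HOL-Analysis.Analysis"
begin

definition tfun :: "nat \<Rightarrow> (nat \<Rightarrow> real) \<Rightarrow> nat \<Rightarrow> real \<Rightarrow> real" where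
  "tfun d c n x = (\<Sum>j=0..d. c j * x ^ j * (1 - 1 / real n) ^ j)"

fun phi :: "nat \<Rightarrow> (nat \<Rightarrow> real) \<Rightarrow> nat \<Rightarrow> nat \<Rightarrow> real" where
  "phi d c n 0 = 1"
| "phi d c n (Suc i) = tfun d c n (phi d c n i)"

definition lam :: "nat \<Rightarrow> (nat \<Rightarrow> real) \<Rightarrow> nat \<Rightarrow> nat \<Rightarrow> real" where
  "lam d c n i = phi d c n (i - 1) - phi d c n i"

end

theory Submission
  imports Defs
begin

text \<open>
  With q = 1 - 1/n the function t(x) = \<Sum>j. c j q^j x^j is a polynomial with non-negative
  coefficients. For 0 \<le> y \<le> x each difference x^j - y^j lies between j y^(j-1) (x - y)
  and j x^(j-1) (x - y), so the secant slope of t on [y, x] lies between t'(y) and t'(x).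
  As t is monotone and maps [0, 1] into itself, the \<phi>_i decrease inside [0, 1], and
  \<lambda>_(i+1) / \<lambda>_i is the secant slope of t on [\<phi>_i, \<phi>_(i-1)]. If some c j q^j with j \<ge> 1 is
  positive, then t(1) < 1 and t is strictly increasing, so the \<phi>_i decrease strictly;
  otherwise t is constant and both the ratio and the derivative vanish.
\<close>

lemma power_diff_bounds:
  fixes a b :: "'a::linordered_idom"
  assumes "0 \<le> b" "b \<le> a"
  shows "of_nat j * b ^ (j - 1) * (a - b) \<le> a ^ j - b ^ j"
    and "a ^ j - b ^ j \<le> of_nat j * a ^ (j - 1) * (a - b)"
proof -
  have diff: "a ^ j - b ^ j = (a - b) * (\<Sum>i<j. b ^ (j - Suc i) * a ^ i)"
    by (rule power_diff_sumr2)
  have lower: "b ^ (j - 1) \<le> b ^ (j - Suc i) * a ^ i" if "i < j" for i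
  proof -
    have "b ^ (j - 1) = b ^ (j - Suc i) * b ^ i"
      using that by (simp add: power_add[symmetric])
    also have "\<dots> \<le> b ^ (j - Suc i) * a ^ i"
      using assms by (intro mult_left_mono power_mono) auto
    finally show ?thesis .
  qed
  have upper: "b ^ (j - Suc i) * a ^ i \<le> a ^ (j - 1)" if "i < j" for i
  proof -
    have "b ^ (j - Suc i) * a ^ i \<le> a ^ (j - Suc i) * a ^ i"
      using assms by (intro mult_right_mono power_mono) auto
    also have "\<dots> = a ^ (j - 1)"
      using that by (simp add: power_add[symmetric])
    finally show ?thesis .
  qed
  have "of_nat j * b ^ (j - 1) \<le> (\<Sum>i<j. b ^ (j - Suc i) * a ^ i)"
    using sum_mono[of "{..<j}" "\<lambda>_. b ^ (j - 1)"] lower by simp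
  then show "of_nat j * b ^ (j - 1) * (a - b) \<le> a ^ j - b ^ j"
    unfolding diff using assms by (metis diff_ge_0_iff_ge mult.commute mult_left_mono)
  have "(\<Sum>i<j. b ^ (j - Suc i) * a ^ i) \<le> of_nat j * a ^ (j - 1)"
    using sum_mono[of "{..<j}" _ "\<lambda>_. a ^ (j - 1)"] upper by simp
  then show "a ^ j - b ^ j \<le> of_nat j * a ^ (j - 1) * (a - b)"
    unfolding diff using assms by (metis diff_ge_0_iff_ge mult.commute mult_left_mono)
qed

lemma one_minus_inverse_of_nat_bounds:
  "0 \<le> 1 - 1 / real n" "1 - 1 / real n \<le> 1"
  by (cases n; simp)+

lemma tfun_coeff_nonneg:
  fixes a :: real
  assumes "0 \<le> a"
  shows "0 \<le> a * (1 - 1 / real n) ^ j"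
  using assms one_minus_inverse_of_nat_bounds by simp

lemma tfun_eq:
  "tfun d c n x = (\<Sum>j=0..d. c j * (1 - 1 / real n) ^ j * x ^ j)"
  by (simp add: tfun_def mult_ac)

lemma tfun_diff:
  "tfun d c n x - tfun d c n y = (\<Sum>j=0..d. c j * (1 - 1 / real n) ^ j * (x ^ j - y ^ j))"
  by (simp add: tfun_def sum_subtractf[symmetric] algebra_simps)

lemma deriv_tfun:
  "deriv (tfun d c n) x = (\<Sum>j=0..d. c j * (1 - 1 / real n) ^ j * (real j * x ^ (j - 1)))"
proof -
  have "tfun d c n = (\<lambda>x. \<Sum>j=0..d. c j * (1 - 1 / real n) ^ j * x ^ j)"
    by (simp add: tfun_eq fun_eq_iff)
  moreover have "((\<lambda>x. \<Sum>j=0..d. c j * (1 - 1 / real n) ^ j * x ^ j) has_real_derivative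
      (\<Sum>j=0..d. c j * (1 - 1 / real n) ^ j * (real j * x ^ (j - 1)))) (at x)"
    by (intro DERIV_sum DERIV_cmult) (simp add: DERIV_pow)
  ultimately show ?thesis
    by (simp add: DERIV_imp_deriv)
qed

lemma tfun_secant_bounds:
  assumes nonneg: "\<And>j. j \<le> d \<Longrightarrow> 0 \<le> c j" and "0 \<le> y" "y \<le> x"
  shows "deriv (tfun d c n) y * (x - y) \<le> tfun d c n x - tfun d c n y"
    and "tfun d c n x - tfun d c n y \<le> deriv (tfun d c n) x * (x - y)"
proof -
  let ?a = "\<lambda>j. c j * (1 - 1 / real n) ^ j"
  have "?a j * (real j * y ^ (j - 1) * (x - y)) \<le> ?a j * (x ^ j - y ^ j)"
    and "?a j * (x ^ j - y ^ j) \<le> ?a j * (real j * x ^ (j - 1) * (x - y))" if "j \<le> d" for j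
    using power_diff_bounds[OF assms(2,3), of j] tfun_coeff_nonneg[OF nonneg[OF that]]
    by (simp_all add: mult_left_mono)
  then show "deriv (tfun d c n) y * (x - y) \<le> tfun d c n x - tfun d c n y"
    and "tfun d c n x - tfun d c n y \<le> deriv (tfun d c n) x * (x - y)"
    unfolding tfun_diff deriv_tfun sum_distrib_right
    by (auto intro!: sum_mono simp: mult.assoc)
qed

lemma tfun_mono:
  assumes nonneg: "\<And>j. j \<le> d \<Longrightarrow> 0 \<le> c j" and "0 \<le> y" "y \<le> x"
  shows "tfun d c n y \<le> tfun d c n x"
proof -
  have "0 \<le> c j * (1 - 1 / real n) ^ j * (x ^ j - y ^ j)" if "j \<le> d" for j
    using tfun_coeff_nonneg[OF nonneg[OF that]] assms(2,3)
    by (simp add: power_mono)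
  then have "0 \<le> tfun d c n x - tfun d c n y"
    unfolding tfun_diff by (intro sum_nonneg) auto
  then show ?thesis by simp
qed

lemma tfun_unit_interval:
  assumes nonneg: "\<And>j. j \<le> d \<Longrightarrow> 0 \<le> c j" and sum: "(\<Sum>j=0..d. c j) = 1"
    and "0 \<le> x" "x \<le> 1"
  shows "0 \<le> tfun d c n x" and "tfun d c n x \<le> 1"
proof -
  have "0 \<le> c j * (1 - 1 / real n) ^ j * x ^ j" if "j \<le> d" for j
    using tfun_coeff_nonneg[OF nonneg[OF that]] assms(3) by simp
  then show "0 \<le> tfun d c n x"
    unfolding tfun_eq by (intro sum_nonneg) auto
  have "(1 - 1 / real n) ^ j * x ^ j \<le> 1" for j
    using one_minus_inverse_of_nat_bounds[of n] assms(3,4)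
    by (intro mult_le_one power_le_one) auto
  then have "c j * (1 - 1 / real n) ^ j * x ^ j \<le> c j" if "j \<le> d" for j
    using nonneg[OF that] by (metis mult.assoc mult_left_le)
  then have "tfun d c n x \<le> (\<Sum>j=0..d. c j)"
    unfolding tfun_eq by (intro sum_mono) auto
  then show "tfun d c n x \<le> 1" using sum by simp
qed

lemma phi_unit_interval:
  assumes "\<And>j. j \<le> d \<Longrightarrow> 0 \<le> c j" and "(\<Sum>j=0..d. c j) = 1"
  shows "0 \<le> phi d c n k \<and> phi d c n k \<le> 1"
  by (induction k) (simp_all add: tfun_unit_interval[OF assms])

lemma phi_Suc_le:
  assumes "\<And>j. j \<le> d \<Longrightarrow> 0 \<le> c j" and "(\<Sum>j=0..d. c j) = 1"
  shows "phi d c n (Suc k) \<le> phi d c n k"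
proof (induction k)
  case 0
  then show ?case using tfun_unit_interval[OF assms, of 1] by simp
next
  case (Suc k)
  have "tfun d c n (phi d c n (Suc k)) \<le> tfun d c n (phi d c n k)"
    using Suc phi_unit_interval[OF assms, where k = "Suc k"] by (intro tfun_mono[of d c, OF assms(1)]) auto
  then show ?case by simp
qed

lemma tfun_strict_mono:
  assumes nonneg: "\<And>j. j \<le> d \<Longrightarrow> 0 \<le> c j"
    and j: "1 \<le> j" "j \<le> d" "0 < c j * (1 - 1 / real n) ^ j"
    and "0 \<le> y" "y < x"
  shows "tfun d c n y < tfun d c n x"
proof -
  have "0 \<le> c i * (1 - 1 / real n) ^ i * (x ^ i - y ^ i)" if "i \<le> d" for i
    using tfun_coeff_nonneg[OF nonneg[OF that]] assms(5,6)
    by (simp add: power_mono)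
  then have "c j * (1 - 1 / real n) ^ j * (x ^ j - y ^ j) \<le> tfun d c n x - tfun d c n y"
    unfolding tfun_diff using j(2) by (intro member_le_sum) auto
  moreover have "0 < c j * (1 - 1 / real n) ^ j * (x ^ j - y ^ j)"
    using j assms(5,6) power_strict_mono[of y x j] by simp
  ultimately show ?thesis by simp
qed

lemma tfun_one_less_one:
  assumes nonneg: "\<And>j. j \<le> d \<Longrightarrow> 0 \<le> c j" and sum: "(\<Sum>j=0..d. c j) = 1"
    and "n \<ge> 1" and j: "1 \<le> j" "j \<le> d" "0 < c j * (1 - 1 / real n) ^ j"
  shows "tfun d c n 1 < 1"
proof -
  have q: "0 \<le> 1 - 1 / real n" "1 - 1 / real n < 1"
    using \<open>n \<ge> 1\<close> by auto
  have "c i * (1 - 1 / real n) ^ i \<le> c i" if "i \<le> d" for i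
    using nonneg[OF that] q by (simp add: mult_left_le power_le_one)
  moreover have "c j * (1 - 1 / real n) ^ j < c j"
  proof -
    have "0 < c j" using j(3) nonneg[OF j(2)] by (simp add: zero_less_mult_iff)
    moreover have "(1 - 1 / real n) ^ j < 1" using q j(1) by (simp add: power_less_one_iff)
    ultimately show ?thesis by (metis mult.right_neutral mult_strict_left_mono)
  qed
  ultimately have "tfun d c n 1 < (\<Sum>j=0..d. c j)"
    unfolding tfun_eq using j(2) by (intro sum_strict_mono_ex1) auto
  then show ?thesis using sum by simp
qed

lemma phi_Suc_less:
  assumes "\<And>j. j \<le> d \<Longrightarrow> 0 \<le> c j" and "(\<Sum>j=0..d. c j) = 1"
    and "n \<ge> 1" and "1 \<le> j" "j \<le> d" "0 < c j * (1 - 1 / real n) ^ j"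
  shows "phi d c n (Suc k) < phi d c n k"
proof (induction k)
  case 0
  then show ?case using tfun_one_less_one[OF assms] by simp
next
  case (Suc k)
  have "tfun d c n (phi d c n (Suc k)) < tfun d c n (phi d c n k)"
    using Suc phi_unit_interval[OF assms(1,2), where k = "Suc k"]
    by (intro tfun_strict_mono[of d c, OF assms(1,4,5,6)]) auto
  then show ?case by simp
qed

lemma tfun_degenerate:
  assumes "\<And>j. 1 \<le> j \<Longrightarrow> j \<le> d \<Longrightarrow> c j * (1 - 1 / real n) ^ j = 0"
  shows "tfun d c n x = tfun d c n y" and "deriv (tfun d c n) x = 0"
proof -
  have vanish: "c j * (1 - 1 / real n) ^ j * z = 0" if "j \<le> d" "j = 0 \<longrightarrow> z = 0" for j z
    using assms[of j] that by (metis One_nat_def Suc_leI mult_zero_left mult_zero_right neq0_conv)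
  have "tfun d c n x - tfun d c n y = 0"
    unfolding tfun_diff by (intro sum.neutral ballI vanish) auto
  then show "tfun d c n x = tfun d c n y" by simp
  show "deriv (tfun d c n) x = 0"
    unfolding deriv_tfun by (intro sum.neutral ballI vanish) auto
qed

theorem proposition3p2:
  fixes d :: nat and c :: "nat \<Rightarrow> real" and n :: nat and i :: nat
  assumes "\<And>j. j \<le> d \<Longrightarrow> c j \<ge> 0"
    and "(\<Sum>j=0..d. c j) = 1"
    and "n \<ge> 1"
    and "i \<ge> 1"
  shows "lam d c n (i + 1) / lam d c n i
           \<in> {deriv (tfun d c n) (phi d c n i) .. deriv (tfun d c n) (phi d c n (i - 1))}"
proof -
  obtain k where i: "i = Suc k" using \<open>i \<ge> 1\<close> by (cases i) auto
  define a b where "a = phi d c n k" and "b = phi d c n (Suc k)"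
  have lam: "lam d c n i = a - b" "lam d c n (i + 1) = tfun d c n a - tfun d c n b"
    by (simp_all add: lam_def i a_def b_def)
  have "0 \<le> b" "b \<le> a"
    using phi_unit_interval[OF assms(1,2), where k = "Suc k"] phi_Suc_le[OF assms(1,2), where k = k]
    by (auto simp: a_def b_def)
  note secant = tfun_secant_bounds[OF assms(1) this]
  show ?thesis
  proof (cases "\<exists>j. 1 \<le> j \<and> j \<le> d \<and> 0 < c j * (1 - 1 / real n) ^ j")
    case True
    then have "b < a"
      using phi_Suc_less[OF assms(1-3)] by (auto simp: a_def b_def)
    then show ?thesis
      using secant unfolding lam by (simp add: i a_def b_def pos_le_divide_eq pos_divide_le_eq)
  next
    case False
    then have "c j * (1 - 1 / real n) ^ j = 0" if "1 \<le> j" "j \<le> d" for j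
      using that tfun_coeff_nonneg[OF assms(1)[OF that(2)]] by (metis antisym linorder_not_less)
    then show ?thesis
      unfolding lam using tfun_degenerate by simp
  qed
qed

end
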